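(* Let $k\ge2$, $\Sigma_k=\{0,1,\dots,k-1\}$, and let $(f(n))_{n\ge0}$ be a $k$-regular sequence. Let $T=(Q,\Sigma_k,\Sigma_k,\delta,q_0,F,\rho)$ be a functional finite-state transducer with transitions on single letters only but arbitrary words as outputs on each transition, where $Q=\{q_0,\dots,q_{r-1}\}$, $\delta:Q\times\Sigma_k\to Q$ is the transition function, $\rho:Q\times\Sigma_k\to\Sigma_k^*$ is the output function, and $F\subseteq Q$ is the set of final states; $\delta$ and $\rho$ are extended to $\Sigma_k^*$ in the obvious way, and for an input word $x$ the output $T(x)=\rho(q_0,x)$ is defined when $\delta(q_0,x)\in F$. Define $g(n)=f(T((n)_k))$, where $(n)_k$ is the canonical base-$k$ representation of $n$ and $f$ applied to a word over $\Sigma_k$ means $f$ evaluated at the integer that word represents in base $k$ (most significant digit first), assuming $T((n)_k)$ is defined for every $n$. Then $(g(n))_{n\ge0}$ is also a $k$-regular sequence.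
   Context: A sequence $(a_n)_{n\ge0}$ is $k$-regular if there is a finite subset $S$ of its $k$-kernel $\{(a_{k^en+i})_{n\ge0}: e\ge0, 0\le i<k^e\}$ such that every element of the $k$-kernel is a linear combination of elements of $S$; equivalently, there exist a row vector $v$, a matrix-valued morphism $\mu$ on $\Sigma_k^*$ and a column vector $w$ with $a_n=v\mu((n)_k)w$ for all $n$ (a linear representation, also satisfying $a_n=v\mu(x)w$ for any base-$k$ representation $x$ of $n$ with leading zeros). A transducer is functional if every input yields at most one output. *)

theory Defs
  imports Main
begin

fun base_rep :: "nat \<Rightarrow> nat \<Rightarrow> nat list" where
  "base_rep k n = (if k < 2 \<or> n = 0 then [] else base_rep k (n div k) @ [n mod k])"

definition word_val :: "nat \<Rightarrow> nat list \<Rightarrow> nat" where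
  "word_val k w = foldl (\<lambda>a d. a * k + d) 0 w"

definition k_kernel :: "nat \<Rightarrow> (nat \<Rightarrow> 'a) \<Rightarrow> (nat \<Rightarrow> 'a) set" where
  "k_kernel k f = {(\<lambda>n. f (k ^ e * n + i)) | e i. i < k ^ e}"

definition k_regular :: "nat \<Rightarrow> (nat \<Rightarrow> 'a::comm_ring_1) \<Rightarrow> bool" where
  "k_regular k f \<longleftrightarrow> (\<exists>S. finite S \<and> S \<subseteq> k_kernel k f \<and>
     (\<forall>h\<in>k_kernel k f. \<exists>c. h = (\<lambda>n. \<Sum>s\<in>S. c s * s n)))"

fun delta_star :: "('q \<Rightarrow> nat \<Rightarrow> 'q) \<Rightarrow> 'q \<Rightarrow> nat list \<Rightarrow> 'q" where
  "delta_star \<delta> q [] = q"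
| "delta_star \<delta> q (a # w) = delta_star \<delta> (\<delta> q a) w"

fun rho_star :: "('q \<Rightarrow> nat \<Rightarrow> 'q) \<Rightarrow> ('q \<Rightarrow> nat \<Rightarrow> nat list) \<Rightarrow> 'q \<Rightarrow> nat list \<Rightarrow> nat list" where
  "rho_star \<delta> \<rho> q [] = []"
| "rho_star \<delta> \<rho> q (a # w) = \<rho> q a @ rho_star \<delta> \<rho> (\<delta> q a) w"

end

theory Submission
  imports Defs "HOL-Library.Function_Algebras" "HOL-Computational_Algebra.Polynomial"
begin

text \<open>Write \<open>T w\<close> for the output of the transducer on the word \<open>w\<close> and \<open>[w]\<close> for its value.
  For \<open>n > 0\<close> and \<open>i < k^e\<close> the representation of \<open>k^e * n + i\<close> is that of \<open>n\<close> followed by the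
  \<open>e\<close> low digits of \<open>i\<close>, so its output is \<open>T (n)\<^sub>k\<close> followed by a word \<open>w\<close> that depends only
  on \<open>e\<close>, \<open>i\<close> and the state reached after reading \<open>(n)\<^sub>k\<close> (for \<open>n = 0\<close>, \<open>w = T (i)\<^sub>k\<close>).
  If a finite set \<open>S\<close> spans the kernel of \<open>f\<close>, then \<open>f (k^|w| * m + [w]) = (\<Sum>t\<in>S. C w t * t m)\<close>
  with coefficient vectors \<open>C w\<close> that are products of the matrices expressing \<open>t (k * m + d)\<close>
  through \<open>S\<close>. Hence every sequence in the kernel of \<open>g\<close> is the image of a vector indexed by
  (state or none) \<open>\<times> S\<close> under one fixed linear map. As the coefficient ring is an arbitrary
  commutative ring, finiteness comes from Noetherianity: all entries lie in the subring
  generated by finitely many coefficients, which is Noetherian by Hilbert's basis theorem, so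
  the module spanned by these vectors is spanned by finitely many of them, and their images
  span the kernel of \<open>g\<close>.\<close>

section \<open>Submodules over a subring\<close>

definition subring :: "'a::comm_ring_1 set \<Rightarrow> bool" where
  "subring R \<longleftrightarrow> 0 \<in> R \<and> 1 \<in> R \<and> (\<forall>x\<in>R. \<forall>y\<in>R. x + y \<in> R \<and> x * y \<in> R \<and> - x \<in> R)"

definition submodule :: "'a::comm_ring_1 set \<Rightarrow> 'a set \<Rightarrow> bool" where
  "submodule S M \<longleftrightarrow> 0 \<in> M \<and> (\<forall>x\<in>M. \<forall>y\<in>M. x + y \<in> M) \<and> (\<forall>s\<in>S. \<forall>x\<in>M. s * x \<in> M)"

inductive_set span_over :: "'a::comm_ring_1 set \<Rightarrow> 'a set \<Rightarrow> 'a set" for S B where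
  zero: "0 \<in> span_over S B"
| add_scaled: "x \<in> span_over S B \<Longrightarrow> s \<in> S \<Longrightarrow> b \<in> B \<Longrightarrow> x + s * b \<in> span_over S B"

lemma subringD:
  assumes "subring R"
  shows subring_zero: "0 \<in> R" and subring_one: "1 \<in> R"
    and subring_add: "x \<in> R \<Longrightarrow> y \<in> R \<Longrightarrow> x + y \<in> R"
    and subring_mult: "x \<in> R \<Longrightarrow> y \<in> R \<Longrightarrow> x * y \<in> R"
    and subring_uminus: "x \<in> R \<Longrightarrow> - x \<in> R"
  using assms unfolding subring_def by blast+

lemma subring_diff: "subring R \<Longrightarrow> x \<in> R \<Longrightarrow> y \<in> R \<Longrightarrow> x - y \<in> R"
  using subring_add[of R x "- y"] subring_uminus[of R y] by simp

lemma subring_power: "subring R \<Longrightarrow> x \<in> R \<Longrightarrow> x ^ n \<in> R"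
  by (induction n) (auto simp: subring_one subring_mult)

lemma subring_sum: "subring R \<Longrightarrow> (\<And>i. i \<in> A \<Longrightarrow> g i \<in> R) \<Longrightarrow> sum g A \<in> R"
  by (induction A rule: infinite_finite_induct) (auto simp: subring_zero subring_add)

lemma submoduleD:
  assumes "submodule S M"
  shows submodule_zero: "0 \<in> M"
    and submodule_add: "x \<in> M \<Longrightarrow> y \<in> M \<Longrightarrow> x + y \<in> M"
    and submodule_scale: "s \<in> S \<Longrightarrow> x \<in> M \<Longrightarrow> s * x \<in> M"
  using assms unfolding submodule_def by blast+

lemma submodule_diff:
  assumes "submodule S M" "subring S" "x \<in> M" "y \<in> M"
  shows "x - y \<in> M"
  using submodule_add[OF assms(1,3) submodule_scale[OF assms(1) subring_uminus[OF assms(2) subring_one[OF assms(2)]] assms(4)]]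
  by simp

lemma submodule_Int: "submodule S M \<Longrightarrow> submodule S N \<Longrightarrow> submodule S (M \<inter> N)"
  unfolding submodule_def by blast

lemma span_over_subset: "submodule S M \<Longrightarrow> B \<subseteq> M \<Longrightarrow> span_over S B \<subseteq> M"
proof
  fix x assume "submodule S M" "B \<subseteq> M" and "x \<in> span_over S B"
  from this(3) show "x \<in> M"
    by induction (use \<open>submodule S M\<close> \<open>B \<subseteq> M\<close> in \<open>auto simp: submoduleD\<close>)
qed

lemma span_over_add:
  assumes "x \<in> span_over S B" "y \<in> span_over S B"
  shows "x + y \<in> span_over S B"
  using assms(2)
proof induction
  case zero
  show ?case using assms(1) by simp
next
  case (add_scaled y s b)
  have "(x + y) + s * b \<in> span_over S B"
    using add_scaled.IH add_scaled.hyps(2,3) by (rule span_over.add_scaled)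
  then show ?case by (simp only: add.assoc)
qed

lemma span_over_scale:
  assumes "subring S" "r \<in> S" "x \<in> span_over S B"
  shows "r * x \<in> span_over S B"
  using assms(3)
proof induction
  case zero
  show ?case by (simp add: span_over.zero)
next
  case (add_scaled x s b)
  have "r * x + (r * s) * b \<in> span_over S B"
    using add_scaled.IH subring_mult[OF assms(1,2) add_scaled.hyps(2)] add_scaled.hyps(3)
    by (rule span_over.add_scaled)
  then show ?case by (simp only: distrib_left mult.assoc)
qed

lemma submodule_span_over: "subring S \<Longrightarrow> submodule S (span_over S B)"
  unfolding submodule_def using span_over.zero span_over_add span_over_scale by blast

lemma span_over_scaled_mem: "s \<in> S \<Longrightarrow> b \<in> B \<Longrightarrow> s * b \<in> span_over S B"
  using span_over.add_scaled[OF span_over.zero] by fastforce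

lemma span_over_superset: "subring S \<Longrightarrow> B \<subseteq> span_over S B"
  using span_over_scaled_mem[OF subring_one, of S _ B] by auto

lemma span_over_mono: "S \<subseteq> S' \<Longrightarrow> B \<subseteq> B' \<Longrightarrow> span_over S B \<subseteq> span_over S' B'"
proof
  fix x assume "S \<subseteq> S'" "B \<subseteq> B'" "x \<in> span_over S B"
  from this(3) show "x \<in> span_over S' B'"
    by induction (use \<open>S \<subseteq> S'\<close> \<open>B \<subseteq> B'\<close> in \<open>auto intro: span_over.intros\<close>)
qed

lemma span_over_finite_subset:
  "x \<in> span_over S B \<Longrightarrow> \<exists>B'. finite B' \<and> B' \<subseteq> B \<and> x \<in> span_over S B'"
proof (induction rule: span_over.induct)
  case (add_scaled x s b)
  then obtain B' where "finite B'" "B' \<subseteq> B" "x \<in> span_over S B'" by blast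
  then have "x + s * b \<in> span_over S (insert b B')"
    using span_over_mono[of S S B' "insert b B'"] add_scaled.hyps(2,3)
    by (blast intro: span_over.add_scaled)
  then show ?case using \<open>finite B'\<close> \<open>B' \<subseteq> B\<close> \<open>b \<in> B\<close> by blast
qed (blast intro: span_over.zero)

lemma span_over_map:
  assumes "\<Phi> 0 = 0" "\<And>x y. \<Phi> (x + y) = \<Phi> x + \<Phi> y" "\<And>r x. r \<in> R \<Longrightarrow> \<Phi> (\<sigma> r * x) = \<tau> r * \<Phi> x"
  shows "\<Phi> ` span_over (\<sigma> ` R) B \<subseteq> span_over (\<tau> ` R) (\<Phi> ` B)"
proof clarify
  fix x assume "x \<in> span_over (\<sigma> ` R) B"
  then show "\<Phi> x \<in> span_over (\<tau> ` R) (\<Phi> ` B)"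
  proof induction
    case (add_scaled x s b)
    then obtain r where "r \<in> R" "s = \<sigma> r" by blast
    then show ?case
      using span_over.add_scaled[OF add_scaled.IH, of "\<tau> r" "\<Phi> b"] add_scaled.hyps(3)
      by (simp add: assms)
  qed (simp add: assms span_over.zero)
qed

lemma submodule_map:
  assumes "submodule (\<sigma> ` R) N" "\<Phi> 0 = 0" "\<And>x y. \<Phi> (x + y) = \<Phi> x + \<Phi> y"
    and "\<And>r x. r \<in> R \<Longrightarrow> \<Phi> (\<sigma> r * x) = \<tau> r * \<Phi> x"
  shows "submodule (\<tau> ` R) (\<Phi> ` N)"
  unfolding submodule_def
proof (intro conjI ballI)
  show "0 \<in> \<Phi> ` N" using submodule_zero[OF assms(1)] assms(2) by (metis image_eqI)
next
  fix x y assume "x \<in> \<Phi> ` N" "y \<in> \<Phi> ` N"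
  then obtain u v where "u \<in> N" "v \<in> N" "x = \<Phi> u" "y = \<Phi> v" by blast
  then show "x + y \<in> \<Phi> ` N" using submodule_add[OF assms(1)] assms(3) by (metis image_eqI)
next
  fix s x assume "s \<in> \<tau> ` R" "x \<in> \<Phi> ` N"
  then obtain r u where "r \<in> R" "s = \<tau> r" "u \<in> N" "x = \<Phi> u" by blast
  then show "s * x \<in> \<Phi> ` N"
    using submodule_scale[OF assms(1), of "\<sigma> r" u] assms(4) by (metis image_eqI)
qed

definition noetherian :: "'a::comm_ring_1 set \<Rightarrow> 'a set \<Rightarrow> bool" where
  "noetherian S M \<longleftrightarrow>
     (\<forall>N. submodule S N \<longrightarrow> N \<subseteq> M \<longrightarrow> (\<exists>B. finite B \<and> B \<subseteq> N \<and> N \<subseteq> span_over S B))"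

lemma noetherianD:
  assumes "noetherian S M" "submodule S N" "N \<subseteq> M"
  obtains B where "finite B" "B \<subseteq> N" "N \<subseteq> span_over S B"
  using assms(1)[unfolded noetherian_def, rule_format, OF assms(2,3)] by blast

lemma noetherian_chain_stabilizes:
  fixes N :: "nat \<Rightarrow> 'a::comm_ring_1 set"
  assumes "noetherian S M" and sub: "\<And>d. submodule S (N d)" "\<And>d. N d \<subseteq> M" and "mono N"
  obtains D where "\<And>d. N d \<subseteq> N D"
proof -
  have "submodule S (\<Union>d. N d)"
    unfolding submodule_def
  proof (intro conjI ballI)
    show "0 \<in> (\<Union>d. N d)" using submodule_zero[OF sub(1)] by blast
  next
    fix x y assume "x \<in> (\<Union>d. N d)" "y \<in> (\<Union>d. N d)"
    then obtain d d' where "x \<in> N d" "y \<in> N d'" by blast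
    moreover have "N d \<subseteq> N (max d d')" "N d' \<subseteq> N (max d d')"
      by (simp_all add: monoD[OF \<open>mono N\<close>])
    ultimately have "x \<in> N (max d d')" "y \<in> N (max d d')" by blast+
    then show "x + y \<in> (\<Union>d. N d)" using submodule_add[OF sub(1)] by blast
  next
    fix s x assume "s \<in> S" "x \<in> (\<Union>d. N d)"
    then show "s * x \<in> (\<Union>d. N d)" using submodule_scale[OF sub(1)] by blast
  qed
  moreover have "(\<Union>d. N d) \<subseteq> M" using sub(2) by blast
  ultimately obtain B where B: "finite B" "B \<subseteq> (\<Union>d. N d)" "(\<Union>d. N d) \<subseteq> span_over S B"
    using noetherianD[OF \<open>noetherian S M\<close>] by blast
  then have "\<forall>b\<in>B. \<exists>d. b \<in> N d" by blast
  then obtain level where level: "\<And>b. b \<in> B \<Longrightarrow> b \<in> N (level b)" by metis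
  define D where "D = Max (insert 0 (level ` B))"
  have "B \<subseteq> N D"
  proof
    fix b assume "b \<in> B"
    then have "level b \<le> D" using B(1) by (simp add: D_def)
    then show "b \<in> N D" using level[OF \<open>b \<in> B\<close>] monoD[OF \<open>mono N\<close>] by blast
  qed
  then have "(\<Union>d. N d) \<subseteq> N D" using B(3) span_over_subset[OF sub(1)] by blast
  then show ?thesis using that by blast
qed

lemma noetherian_finite_spanning_subset:
  assumes "subring S" "noetherian S M" "submodule S M" "X \<subseteq> M"
  obtains X0 where "finite X0" "X0 \<subseteq> X" "X \<subseteq> span_over S X0"
proof -
  have "span_over S X \<subseteq> M" using span_over_subset[OF assms(3,4)] .
  then obtain B where B: "finite B" "B \<subseteq> span_over S X" "span_over S X \<subseteq> span_over S B"
    using noetherianD[OF assms(2) submodule_span_over[OF assms(1)]] by blast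
  have "\<forall>b\<in>B. \<exists>X'. finite X' \<and> X' \<subseteq> X \<and> b \<in> span_over S X'"
    using B(2) span_over_finite_subset by blast
  then obtain X' where X': "\<And>b. b \<in> B \<Longrightarrow> finite (X' b) \<and> X' b \<subseteq> X \<and> b \<in> span_over S (X' b)"
    by (metis (no_types))
  define X0 where "X0 = (\<Union>b\<in>B. X' b)"
  have "finite X0" "X0 \<subseteq> X" using B(1) X' by (auto simp: X0_def)
  have "B \<subseteq> span_over S X0"
  proof
    fix b assume "b \<in> B"
    then have "X' b \<subseteq> X0" by (auto simp: X0_def)
    then show "b \<in> span_over S X0" using X'[OF \<open>b \<in> B\<close>] span_over_mono[of S S "X' b" X0] by blast
  qed
  then have "span_over S B \<subseteq> span_over S X0"
    by (rule span_over_subset[OF submodule_span_over[OF assms(1)]])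
  then have "X \<subseteq> span_over S X0"
    using span_over_superset[OF assms(1), of X] B(3) by blast
  with \<open>finite X0\<close> \<open>X0 \<subseteq> X\<close> show ?thesis by (rule that)
qed

section \<open>Hilbert's basis theorem for finitely generated subrings\<close>

lemma int_ideal_principal:
  fixes J :: "int set"
  assumes "0 \<in> J" "\<And>i j. i \<in> J \<Longrightarrow> j \<in> J \<Longrightarrow> i + j \<in> J" "\<And>z j. j \<in> J \<Longrightarrow> z * j \<in> J"
  obtains d where "d \<in> J" "\<And>j. j \<in> J \<Longrightarrow> d dvd j"
proof (cases "J \<subseteq> {0}")
  case True
  then show ?thesis using that assms(1) by blast
next
  case False
  then obtain z where "z \<in> J" "z \<noteq> 0" by blast
  then have "\<bar>z\<bar> \<in> J" using assms(3)[of z "sgn z"] by (simp add: abs_sgn mult.commute)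
  then have "\<exists>n::nat. 0 < n \<and> int n \<in> J" using \<open>z \<noteq> 0\<close> by (intro exI[of _ "nat \<bar>z\<bar>"]) simp
  define n where "n = (LEAST n::nat. 0 < n \<and> int n \<in> J)"
  have n: "0 < n" "int n \<in> J"
    using LeastI_ex[OF \<open>\<exists>n. 0 < n \<and> int n \<in> J\<close>] by (simp_all add: n_def)
  have least: "m = 0" if "m < n" "int m \<in> J" for m
    using not_less_Least[of m "\<lambda>n. 0 < n \<and> int n \<in> J"] that by (auto simp: n_def)
  have "int n dvd j" if "j \<in> J" for j
  proof -
    have "j + (- (j div int n)) * int n \<in> J" using assms(2,3) that n(2) by blast
    moreover have "j + (- (j div int n)) * int n = j mod int n"
      by (metis add_uminus_conv_diff minus_div_mult_eq_mod mult_minus_left)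
    ultimately have "int (nat (j mod int n)) \<in> J" using n(1) by simp
    moreover have "nat (j mod int n) < n"
      using n(1) by (metis nat_less_iff of_nat_0_less_iff pos_mod_bound pos_mod_sign)
    ultimately have "nat (j mod int n) = 0" using least by blast
    moreover have "0 \<le> j mod int n" using n(1) by simp
    ultimately show ?thesis by (simp add: dvd_eq_mod_eq_0)
  qed
  then show ?thesis using that n(2) by blast
qed

lemma subring_Ints: "subring \<int>"
  unfolding subring_def by (simp add: Ints_add Ints_mult Ints_minus)

lemma noetherian_Ints: "noetherian (\<int> :: 'a::comm_ring_1 set) \<int>"
  unfolding noetherian_def
proof (intro allI impI)
  fix I :: "'a set" assume I: "submodule \<int> I" "I \<subseteq> \<int>"
  define J where "J = {z. of_int z \<in> I}"
  have "0 \<in> J" using submodule_zero[OF I(1)] by (simp add: J_def)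
  moreover have "i + j \<in> J" if "i \<in> J" "j \<in> J" for i j
    using submodule_add[OF I(1)] that by (simp add: J_def)
  moreover have "z * j \<in> J" if "j \<in> J" for z j
    using submodule_scale[OF I(1), of "of_int z"] that by (simp add: J_def)
  ultimately obtain d where d: "d \<in> J" "\<And>j. j \<in> J \<Longrightarrow> d dvd j"
    using int_ideal_principal by metis
  have "I \<subseteq> span_over \<int> {of_int d}"
  proof
    fix x assume "x \<in> I"
    then obtain j where "x = of_int j" "j \<in> J" using I(2) by (auto simp: J_def elim!: Ints_cases)
    then have "x = of_int (j div d) * of_int d" using d(2) by (simp flip: of_int_mult)
    then show "x \<in> span_over \<int> {of_int d}" by (simp add: span_over_scaled_mem)
  qed
  moreover have "{of_int d} \<subseteq> I" using d(1) by (simp add: J_def)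
  ultimately show "\<exists>B. finite B \<and> B \<subseteq> I \<and> I \<subseteq> span_over \<int> B" by blast
qed

definition poly_over :: "'a::comm_ring_1 set \<Rightarrow> 'a poly set" where
  "poly_over R = {p. \<forall>i. coeff p i \<in> R}"

definition adjoin :: "'a::comm_ring_1 set \<Rightarrow> 'a \<Rightarrow> 'a set" where
  "adjoin R a = (\<lambda>p. poly p a) ` poly_over R"

lemma poly_over_const: "subring R \<Longrightarrow> c \<in> R \<Longrightarrow> [:c:] \<in> poly_over R"
  by (simp add: poly_over_def coeff_pCons subring_zero split: nat.split)

lemma poly_over_monom: "subring R \<Longrightarrow> monom 1 m \<in> poly_over R"
  by (simp add: poly_over_def coeff_monom subring_zero subring_one)

lemma poly_over_add: "subring R \<Longrightarrow> p \<in> poly_over R \<Longrightarrow> q \<in> poly_over R \<Longrightarrow> p + q \<in> poly_over R"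
  by (simp add: poly_over_def subring_add)

lemma poly_over_uminus: "subring R \<Longrightarrow> p \<in> poly_over R \<Longrightarrow> - p \<in> poly_over R"
  by (simp add: poly_over_def subring_uminus)

lemma poly_over_diff: "subring R \<Longrightarrow> p \<in> poly_over R \<Longrightarrow> q \<in> poly_over R \<Longrightarrow> p - q \<in> poly_over R"
  by (simp add: poly_over_def subring_diff)

lemma poly_over_mult: "subring R \<Longrightarrow> p \<in> poly_over R \<Longrightarrow> q \<in> poly_over R \<Longrightarrow> p * q \<in> poly_over R"
  unfolding poly_over_def by (auto simp: Polynomial.coeff_mult intro!: subring_sum subring_mult)

lemma subring_adjoin:
  assumes R: "subring R"
  shows "subring (adjoin R a)"
  unfolding subring_def[of "adjoin R a"]
proof (intro conjI ballI)
  show "0 \<in> adjoin R a" "1 \<in> adjoin R a"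
    unfolding adjoin_def using poly_over_const[OF R subring_zero[OF R]] poly_over_const[OF R subring_one[OF R]]
    by force+
  fix x y assume "x \<in> adjoin R a" "y \<in> adjoin R a"
  then obtain p q where pq: "p \<in> poly_over R" "q \<in> poly_over R" "x = poly p a" "y = poly q a"
    unfolding adjoin_def by blast
  show "x + y \<in> adjoin R a"
    unfolding adjoin_def using pq poly_over_add[OF R pq(1,2)] by (intro image_eqI[where x = "p + q"]) simp_all
  show "x * y \<in> adjoin R a"
    unfolding adjoin_def using pq poly_over_mult[OF R pq(1,2)] by (intro image_eqI[where x = "p * q"]) simp_all
  show "- x \<in> adjoin R a"
    unfolding adjoin_def using pq poly_over_uminus[OF R pq(1)] by (intro image_eqI[where x = "- p"]) simp_all
qed

lemma subset_adjoin: "subring R \<Longrightarrow> R \<subseteq> adjoin R a"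
  unfolding adjoin_def using poly_over_const by force

lemma mem_adjoin: "subring R \<Longrightarrow> a \<in> adjoin R a"
  unfolding adjoin_def using poly_over_monom[of R 1] by (force simp: poly_monom)

definition lead_coeffs :: "'a::comm_ring_1 set \<Rightarrow> 'a \<Rightarrow> 'a set \<Rightarrow> nat \<Rightarrow> 'a set" where
  "lead_coeffs R a J d = {coeff p d | p. p \<in> poly_over R \<and> degree p \<le> d \<and> poly p a \<in> J}"

lemma lead_coeffs_subset: "lead_coeffs R a J d \<subseteq> R"
  by (auto simp: lead_coeffs_def poly_over_def)

lemma submodule_lead_coeffs:
  assumes R: "subring R" and J: "submodule (adjoin R a) J"
  shows "submodule R (lead_coeffs R a J d)"
  unfolding submodule_def
proof (intro conjI ballI)
  show "0 \<in> lead_coeffs R a J d"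
    unfolding lead_coeffs_def using poly_over_const[OF R subring_zero[OF R]] submodule_zero[OF J]
    by (intro CollectI exI[of _ 0]) simp
next
  fix x y assume "x \<in> lead_coeffs R a J d" "y \<in> lead_coeffs R a J d"
  then obtain p q where p: "p \<in> poly_over R" "degree p \<le> d" "poly p a \<in> J" "x = coeff p d"
    and q: "q \<in> poly_over R" "degree q \<le> d" "poly q a \<in> J" "y = coeff q d"
    unfolding lead_coeffs_def by blast
  have "degree (p + q) \<le> d" using p(2) q(2) by (intro degree_add_le)
  then show "x + y \<in> lead_coeffs R a J d"
    unfolding lead_coeffs_def using p q poly_over_add[OF R p(1) q(1)] submodule_add[OF J p(3) q(3)]
    by (intro CollectI exI[of _ "p + q"]) simp
next
  fix s x assume "s \<in> R" "x \<in> lead_coeffs R a J d"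
  then obtain p where p: "p \<in> poly_over R" "degree p \<le> d" "poly p a \<in> J" "x = coeff p d"
    unfolding lead_coeffs_def by blast
  have "s \<in> adjoin R a" using subset_adjoin[OF R] \<open>s \<in> R\<close> by blast
  then have "poly (smult s p) a \<in> J" using submodule_scale[OF J _ p(3)] by simp
  moreover have "smult s p \<in> poly_over R"
    using p(1) \<open>s \<in> R\<close> by (simp add: poly_over_def subring_mult[OF R])
  ultimately show "s * x \<in> lead_coeffs R a J d"
    unfolding lead_coeffs_def using p(2,4) degree_smult_le[of s p]
    by (intro CollectI exI[of _ "smult s p"]) simp
qed

lemma lead_coeffs_degree_mono:
  assumes R: "subring R" and J: "submodule (adjoin R a) J" and "d \<le> d'"
  shows "lead_coeffs R a J d \<subseteq> lead_coeffs R a J d'"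
proof
  fix c assume "c \<in> lead_coeffs R a J d"
  then obtain p where p: "p \<in> poly_over R" "degree p \<le> d" "poly p a \<in> J" "c = coeff p d"
    unfolding lead_coeffs_def by blast
  define m where "m = d' - d"
  have "a ^ m \<in> adjoin R a" using subring_power[OF subring_adjoin[OF R] mem_adjoin[OF R]] .
  then have "poly (monom 1 m * p) a \<in> J" using submodule_scale[OF J _ p(3)] by (simp add: poly_monom)
  moreover have "monom 1 m * p \<in> poly_over R" using poly_over_mult[OF R poly_over_monom[OF R] p(1)] .
  moreover have "degree (monom 1 m * p) \<le> m + d"
    using degree_mult_le[of "monom 1 m" p] degree_monom_le[of "1::'a" m] p(2) by linarith
  then have "degree (monom 1 m * p) \<le> d'" using \<open>d \<le> d'\<close> by (simp add: m_def)
  moreover have "coeff (monom 1 m * p) d' = c"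
    using p(4) \<open>d \<le> d'\<close> by (simp add: coeff_monom_mult m_def)
  ultimately show "c \<in> lead_coeffs R a J d'" unfolding lead_coeffs_def by blast
qed

lemma lead_coeffs_mono: "J \<subseteq> J' \<Longrightarrow> lead_coeffs R a J d \<subseteq> lead_coeffs R a J' d"
  unfolding lead_coeffs_def by blast

lemma lead_coeffs_lift:
  assumes R: "subring R" and G: "finite G" "G \<subseteq> lead_coeffs R a I d"
  obtains B where "finite B" "B \<subseteq> I" "G \<subseteq> lead_coeffs R a (I \<inter> span_over (adjoin R a) B) d"
proof -
  have "\<forall>c\<in>G. \<exists>p. p \<in> poly_over R \<and> degree p \<le> d \<and> poly p a \<in> I \<and> coeff p d = c"
    using G(2) unfolding lead_coeffs_def by blast
  then have "\<exists>W. \<forall>c\<in>G. W c \<in> poly_over R \<and> degree (W c) \<le> d \<and> poly (W c) a \<in> I \<and> coeff (W c) d = c"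
    by (rule bchoice)
  then obtain W where W: "\<forall>c\<in>G. W c \<in> poly_over R \<and> degree (W c) \<le> d \<and> poly (W c) a \<in> I \<and> coeff (W c) d = c"
    by blast
  define B where "B = (\<lambda>c. poly (W c) a) ` G"
  have "G \<subseteq> lead_coeffs R a (I \<inter> span_over (adjoin R a) B) d"
  proof
    fix c assume "c \<in> G"
    then have "poly (W c) a \<in> I \<inter> span_over (adjoin R a) B"
      using W span_over_superset[OF subring_adjoin[OF R], of B] by (auto simp: B_def)
    then show "c \<in> lead_coeffs R a (I \<inter> span_over (adjoin R a) B) d"
      unfolding lead_coeffs_def using W \<open>c \<in> G\<close> by (intro CollectI exI[of _ "W c"]) simp
  qed
  moreover have "finite B" "B \<subseteq> I" using G(1) W by (auto simp: B_def)
  ultimately show ?thesis using that by blast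
qed

lemma lead_coeffs_finite_lift:
  assumes R: "subring R" "noetherian R R" and I: "submodule (adjoin R a) I"
  shows "\<exists>B. finite B \<and> B \<subseteq> I \<and> lead_coeffs R a I d \<subseteq> lead_coeffs R a (I \<inter> span_over (adjoin R a) B) d"
proof -
  obtain G where G: "finite G" "G \<subseteq> lead_coeffs R a I d" "lead_coeffs R a I d \<subseteq> span_over R G"
    using noetherianD[OF R(2) submodule_lead_coeffs[OF R(1) I] lead_coeffs_subset] by blast
  obtain B where B: "finite B" "B \<subseteq> I" "G \<subseteq> lead_coeffs R a (I \<inter> span_over (adjoin R a) B) d"
    using lead_coeffs_lift[OF R(1) G(1,2)] by blast
  have "submodule (adjoin R a) (I \<inter> span_over (adjoin R a) B)"
    using submodule_Int[OF I submodule_span_over[OF subring_adjoin[OF R(1)]]] .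
  then have "lead_coeffs R a I d \<subseteq> lead_coeffs R a (I \<inter> span_over (adjoin R a) B) d"
    using G(3) span_over_subset[OF submodule_lead_coeffs[OF R(1)] B(3)] by blast
  with B(1,2) show ?thesis by blast
qed

lemma subset_if_lead_coeffs_subset:
  assumes R: "subring R" and I: "submodule (adjoin R a) I" "I \<subseteq> adjoin R a"
    and J: "submodule (adjoin R a) J" "J \<subseteq> I"
    and lc: "\<And>d. lead_coeffs R a I d \<subseteq> lead_coeffs R a J d"
  shows "I \<subseteq> J"
proof -
  have claim: "\<forall>p \<in> poly_over R. (\<forall>i\<ge>n. coeff p i = 0) \<longrightarrow> poly p a \<in> I \<longrightarrow> poly p a \<in> J" for n
  proof (induction n)
    case 0
    show ?case
    proof (intro ballI impI)
      fix p :: "'a poly" assume "\<forall>i\<ge>0. coeff p i = 0"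
      then have "p = 0" by (simp add: poly_eq_iff)
      then show "poly p a \<in> J" using submodule_zero[OF J(1)] by simp
    qed
  next
    case (Suc n)
    show ?case
    proof (intro ballI impI)
      fix p assume p: "p \<in> poly_over R" "\<forall>i\<ge>Suc n. coeff p i = 0" "poly p a \<in> I"
      have "degree p \<le> n" using p(2) by (intro degree_le) auto
      then have "coeff p n \<in> lead_coeffs R a J n"
        using lc p(1,3) unfolding lead_coeffs_def by blast
      then obtain q where q: "q \<in> poly_over R" "degree q \<le> n" "poly q a \<in> J" "coeff q n = coeff p n"
        unfolding lead_coeffs_def by auto
      have "coeff (p - q) i = 0" if "i \<ge> n" for i
      proof (cases "i = n")
        case False
        then have "coeff p i = 0" "coeff q i = 0" using p(2) q(2) that by (auto intro: coeff_eq_0)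
        then show ?thesis by simp
      qed (simp add: q(4))
      moreover have "poly (p - q) a \<in> I"
        using submodule_diff[OF I(1) subring_adjoin[OF R] p(3)] q(3) J(2) by auto
      ultimately have "poly (p - q) a \<in> J"
        using Suc.IH poly_over_diff[OF R p(1) q(1)] by blast
      then have "poly (p - q) a + poly q a \<in> J" using submodule_add[OF J(1) _ q(3)] by blast
      then show "poly p a \<in> J" by simp
    qed
  qed
  show ?thesis
  proof
    fix x assume "x \<in> I"
    then obtain p where "p \<in> poly_over R" "x = poly p a" using I(2) unfolding adjoin_def by blast
    moreover have "\<forall>i\<ge>Suc (degree p). coeff p i = 0" by (simp add: coeff_eq_0)
    ultimately show "x \<in> J" using claim \<open>x \<in> I\<close> by blast
  qed
qed

lemma noetherian_adjoin:
  assumes R: "subring R" "noetherian R R"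
  shows "noetherian (adjoin R a) (adjoin R a)"
  unfolding noetherian_def
proof (intro allI impI)
  fix I assume I: "submodule (adjoin R a) I" "I \<subseteq> adjoin R a"
  let ?L = "lead_coeffs R a I"
  have sub_L: "submodule R (?L d)" for d using submodule_lead_coeffs[OF R(1) I(1)] .
  have "mono ?L" by (rule monoI) (rule lead_coeffs_degree_mono[OF R(1) I(1)])
  then obtain D where D: "\<And>d. ?L d \<subseteq> ?L D"
    using noetherian_chain_stabilizes[where N = ?L, OF R(2) sub_L lead_coeffs_subset] by blast
  have "\<forall>d. \<exists>B. finite B \<and> B \<subseteq> I \<and> ?L d \<subseteq> lead_coeffs R a (I \<inter> span_over (adjoin R a) B) d"
    using lead_coeffs_finite_lift[OF R I(1)] by blast
  then have "\<exists>Bs. \<forall>d. finite (Bs d) \<and> Bs d \<subseteq> I \<and> ?L d \<subseteq> lead_coeffs R a (I \<inter> span_over (adjoin R a) (Bs d)) d"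
    by (rule choice)
  then obtain Bs where Bs: "\<And>d. finite (Bs d)" "\<And>d. Bs d \<subseteq> I"
    "\<And>d. ?L d \<subseteq> lead_coeffs R a (I \<inter> span_over (adjoin R a) (Bs d)) d"
    by blast
  define B where "B = (\<Union>d\<le>D. Bs d)"
  define J where "J = I \<inter> span_over (adjoin R a) B"
  have J: "submodule (adjoin R a) J" "J \<subseteq> I"
    using submodule_Int[OF I(1) submodule_span_over[OF subring_adjoin[OF R(1)]]] by (simp_all add: J_def)
  have low: "?L d \<subseteq> lead_coeffs R a J d" if "d \<le> D" for d
    using Bs(3)[of d] lead_coeffs_mono[of "I \<inter> span_over (adjoin R a) (Bs d)" J R a d]
      span_over_mono[of "adjoin R a" "adjoin R a" "Bs d" B] that
    by (auto simp: J_def B_def)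
  have "?L d \<subseteq> lead_coeffs R a J d" for d
  proof (cases "d \<le> D")
    case False
    then show ?thesis using D low[of D] lead_coeffs_degree_mono[OF R(1) J(1), of D d] by auto
  qed (rule low)
  then have "I \<subseteq> J" by (rule subset_if_lead_coeffs_subset[OF R(1) I J])
  moreover have "finite B" "B \<subseteq> I" using Bs(1,2) by (auto simp: B_def)
  ultimately show "\<exists>B. finite B \<and> B \<subseteq> I \<and> I \<subseteq> span_over (adjoin R a) B"
    by (auto simp: J_def)
qed

lemma noetherian_subring_containing:
  fixes G :: "'a::comm_ring_1 set"
  assumes "finite G"
  shows "\<exists>R. subring R \<and> noetherian R R \<and> G \<subseteq> R"
  using assms
proof (induction rule: finite_induct)
  case empty
  show ?case using subring_Ints noetherian_Ints by blast
next
  case (insert a G)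
  then obtain R where R: "subring R" "noetherian R R" "G \<subseteq> R" by blast
  have "insert a G \<subseteq> adjoin R a" using subset_adjoin[OF R(1), of a] mem_adjoin[OF R(1)] R(3) by blast
  then show ?case
    using subring_adjoin[OF R(1)] noetherian_adjoin[OF R(1,2)] by blast
qed

section \<open>Finitely generated free modules\<close>

text \<open>With the pointwise ring structure on functions, \<open>R\<close> acts on vectors through the constant
  functions, so submodules and spans of vectors are instances of \<^const>\<open>submodule\<close> and
  \<^const>\<open>span_over\<close>.\<close>

abbreviation const_funs :: "'a set \<Rightarrow> ('i \<Rightarrow> 'a) set" where
  "const_funs R \<equiv> (\<lambda>r _. r) ` R"

definition vectors :: "'a::comm_ring_1 set \<Rightarrow> 'i set \<Rightarrow> ('i \<Rightarrow> 'a) set" where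
  "vectors R I = {v. (\<forall>i\<in>I. v i \<in> R) \<and> (\<forall>i. i \<notin> I \<longrightarrow> v i = 0)}"

lemma subring_const_funs:
  assumes "subring R"
  shows "subring (const_funs R :: ('i \<Rightarrow> 'a::comm_ring_1) set)"
  unfolding subring_def
proof (intro conjI ballI)
  show "0 \<in> (const_funs R :: ('i \<Rightarrow> 'a) set)" "1 \<in> (const_funs R :: ('i \<Rightarrow> 'a) set)"
    using subring_zero[OF assms] subring_one[OF assms]
    by (auto simp: zero_fun_def one_fun_def)
  fix x y :: "'i \<Rightarrow> 'a" assume "x \<in> const_funs R" "y \<in> const_funs R"
  then obtain r s where "r \<in> R" "s \<in> R" "x = (\<lambda>_. r)" "y = (\<lambda>_. s)" by blast
  then show "x + y \<in> const_funs R" "x * y \<in> const_funs R" "- x \<in> const_funs R"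
    using subring_add[OF assms] subring_mult[OF assms] subring_uminus[OF assms]
    by (auto simp: plus_fun_def times_fun_def fun_Compl_def)
qed

lemma submodule_vectors: "subring R \<Longrightarrow> submodule (const_funs R) (vectors R I)"
  by (auto simp: submodule_def vectors_def subring_zero subring_add subring_mult)

lemma submodule_coordinate:
  "submodule (const_funs R) M \<Longrightarrow> submodule R ((\<lambda>v. v j) ` M)"
  using submodule_map[of "\<lambda>r _. r" R M "\<lambda>v. v j" "\<lambda>r. r"] by simp

lemma subset_span_over_by_coordinate:
  fixes N B :: "('i \<Rightarrow> 'a::comm_ring_1) set"
  assumes R: "subring R" and N: "submodule (const_funs R) N"
    and C: "(\<lambda>v. v j) ` N \<subseteq> span_over R C" "C \<subseteq> (\<lambda>v. v j) ` (N \<inter> span_over (const_funs R) B)"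
    and ker: "{v \<in> N. v j = 0} \<subseteq> span_over (const_funs R) B"
  shows "N \<subseteq> span_over (const_funs R) B"
proof
  fix v assume "v \<in> N"
  have sub_funs: "subring (const_funs R :: ('i \<Rightarrow> 'a) set)" by (rule subring_const_funs[OF R])
  let ?M = "N \<inter> span_over (const_funs R) B"
  have "submodule R ((\<lambda>v. v j) ` ?M)"
    by (rule submodule_coordinate[OF submodule_Int[OF N submodule_span_over[OF sub_funs]]])
  then have "span_over R C \<subseteq> (\<lambda>v. v j) ` ?M" using C(2) by (rule span_over_subset)
  then have "v j \<in> (\<lambda>v. v j) ` ?M" using C(1) \<open>v \<in> N\<close> by blast
  then obtain u where "u \<in> ?M" "v j = u j" by (rule imageE)
  then have u: "u \<in> N" "u \<in> span_over (const_funs R) B" "u j = v j" by simp_all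
  have "v - u \<in> N" using submodule_diff[OF N sub_funs \<open>v \<in> N\<close> u(1)] .
  then have "v - u \<in> span_over (const_funs R) B" using ker u(3) by auto
  from span_over_add[OF this u(2)] show "v \<in> span_over (const_funs R) B" by simp
qed

lemma noetherian_vectors:
  fixes I :: "'i set"
  assumes R: "subring R" "noetherian R R" and "finite I"
  shows "noetherian (const_funs R) (vectors R I)"
  using \<open>finite I\<close>
proof (induction rule: finite_induct)
  case empty
  have "v \<in> span_over (const_funs R) {}" if "v \<in> vectors R {}" for v :: "'i \<Rightarrow> 'a"
  proof -
    have "v = 0" using that by (auto simp: vectors_def)
    then show ?thesis by (simp add: span_over.zero)
  qed
  then show ?case unfolding noetherian_def by blast
next
  case (insert j I)
  show ?case
    unfolding noetherian_def
  proof (intro allI impI)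
    fix N assume N: "submodule (const_funs R) N" "N \<subseteq> vectors R (insert j I)"
    have "(\<lambda>v. v j) ` N \<subseteq> R" using N(2) by (auto simp: vectors_def)
    then obtain C where C: "finite C" "C \<subseteq> (\<lambda>v. v j) ` N" "(\<lambda>v. v j) ` N \<subseteq> span_over R C"
      using noetherianD[OF R(2) submodule_coordinate[OF N(1)]] by blast
    have "\<forall>c\<in>C. \<exists>v. v \<in> N \<and> v j = c" using C(2) by blast
    then have "\<exists>lift. \<forall>c\<in>C. lift c \<in> N \<and> lift c j = c" by (rule bchoice)
    then obtain lift where lift: "\<forall>c\<in>C. lift c \<in> N \<and> lift c j = c" by blast
    define N0 where "N0 = {v \<in> N. v j = 0}"
    have "submodule (const_funs R) N0" using N(1) unfolding N0_def submodule_def by auto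
    moreover have "N0 \<subseteq> vectors R I" using N(2) by (auto simp: N0_def vectors_def)
    ultimately obtain B0 where B0: "finite B0" "B0 \<subseteq> N0" "N0 \<subseteq> span_over (const_funs R) B0"
      using noetherianD[OF insert.IH] by blast
    define B where "B = lift ` C \<union> B0"
    have "N \<subseteq> span_over (const_funs R) B"
    proof (rule subset_span_over_by_coordinate[OF R(1) N(1) C(3)])
      show "C \<subseteq> (\<lambda>v. v j) ` (N \<inter> span_over (const_funs R) B)"
      proof
        fix c assume "c \<in> C"
        then have "lift c \<in> N \<inter> span_over (const_funs R) B" "c = lift c j"
          using lift span_over_superset[OF subring_const_funs[OF R(1)], of B] by (auto simp: B_def)
        then show "c \<in> (\<lambda>v. v j) ` (N \<inter> span_over (const_funs R) B)" by blast
      qed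
      show "{v \<in> N. v j = 0} \<subseteq> span_over (const_funs R) B"
        using B0(3) span_over_mono[of "const_funs R" "const_funs R" B0 B] by (auto simp: B_def N0_def)
    qed
    moreover have "finite B" using C(1) B0(1) by (simp add: B_def)
    moreover have "B \<subseteq> N" using lift B0(2) by (auto simp: B_def N0_def)
    ultimately show "\<exists>B. finite B \<and> B \<subseteq> N \<and> N \<subseteq> span_over (const_funs R) B" by blast
  qed
qed

lemma word_val_Nil [simp]: "word_val k [] = 0"
  by (simp add: word_val_def)

lemma foldl_word_val: "foldl (\<lambda>a d. a * k + d) x v = x * k ^ length v + word_val k v"
proof (induction v arbitrary: x)
  case (Cons d v)
  have "word_val k (d # v) = d * k ^ length v + word_val k v"
    using Cons.IH[of d] by (simp add: word_val_def)
  then show ?case using Cons.IH[of "x * k + d"] by (simp add: algebra_simps)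
qed simp

lemma word_val_append: "word_val k (u @ v) = word_val k u * k ^ length v + word_val k v"
  unfolding word_val_def foldl_append by (rule foldl_word_val[unfolded word_val_def])

lemma word_val_Cons: "word_val k (d # v) = d * k ^ length v + word_val k v"
  using word_val_append[of k "[d]" v] by (simp add: word_val_def)

declare base_rep.simps [simp del] \<comment> \<open>its unconditional recursive equation would loop\<close>

lemma base_rep_0 [simp]: "base_rep k 0 = []"
  by (subst base_rep.simps) simp

lemma base_rep_pos: "k \<ge> 2 \<Longrightarrow> 0 < n \<Longrightarrow> base_rep k n = base_rep k (n div k) @ [n mod k]"
  by (subst base_rep.simps) simp

lemma base_rep_digits: "set (base_rep k n) \<subseteq> {..<k}"
proof (induction k n rule: base_rep.induct)
  case (1 k n)
  then show ?case by (subst base_rep.simps) auto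
qed

fun low_digits :: "nat \<Rightarrow> nat \<Rightarrow> nat \<Rightarrow> nat list" where
  "low_digits k 0 i = []"
| "low_digits k (Suc e) i = low_digits k e (i div k) @ [i mod k]"

lemma low_digits_digits: "0 < k \<Longrightarrow> set (low_digits k e i) \<subseteq> {..<k}"
  by (induction e arbitrary: i) auto

lemma base_rep_append_low_digits:
  assumes "k \<ge> 2" "0 < n" "i < k ^ e"
  shows "base_rep k (k ^ e * n + i) = base_rep k n @ low_digits k e i"
  using assms(3)
proof (induction e arbitrary: i)
  case (Suc e)
  define x where "x = k ^ Suc e * n + i"
  have "x = (k ^ e * n + i div k) * k + i mod k" by (simp add: x_def algebra_simps)
  then have "x div k = k ^ e * n + i div k" "x mod k = i mod k" using assms(1) by simp_all
  moreover have "0 < x" using assms(1,2) by (simp add: x_def)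
  moreover have "i div k < k ^ e"
    using Suc.prems assms(1) by (simp add: div_less_iff_less_mult mult.commute)
  ultimately show ?case
    using base_rep_pos[OF assms(1), of x] Suc.IH by (simp add: x_def)
qed simp

section \<open>Regular sequences\<close>

lemma span_over_const_funs_combination:
  fixes Z :: "('n \<Rightarrow> 'a::comm_ring_1) set"
  assumes "finite Z" "x \<in> span_over (const_funs UNIV) Z"
  shows "\<exists>c. x = (\<lambda>n. \<Sum>z\<in>Z. c z * z n)"
  using assms(2)
proof induction
  case zero
  show ?case by (intro exI[of _ "\<lambda>_. 0"]) (simp add: zero_fun_def)
next
  case (add_scaled x s b)
  then obtain c r where x: "x = (\<lambda>n. \<Sum>z\<in>Z. c z * z n)" and s: "s = (\<lambda>_. r)" by blast
  have "(x + s * b) n = (\<Sum>z\<in>Z. (c z + (if z = b then r else 0)) * z n)" for n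
  proof -
    have "(\<Sum>z\<in>Z. (c z + (if z = b then r else 0)) * z n)
        = (\<Sum>z\<in>Z. c z * z n + (if z = b then r * z n else 0))"
      by (rule sum.cong) (simp_all add: distrib_right)
    also have "\<dots> = (\<Sum>z\<in>Z. c z * z n) + (\<Sum>z\<in>Z. if z = b then r * z n else 0)"
      by (rule sum.distrib)
    also have "\<dots> = x n + r * b n" using assms(1) \<open>b \<in> Z\<close> by (simp add: x)
    finally show ?thesis by (simp add: s)
  qed
  then show ?case by (intro exI[of _ "\<lambda>z. c z + (if z = b then r else 0)"]) (simp add: fun_eq_iff)
qed

lemma k_regularI_coordinates:
  fixes g :: "nat \<Rightarrow> 'a::comm_ring_1" and X :: "nat \<Rightarrow> nat \<Rightarrow> 'i \<Rightarrow> 'a"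
  assumes R: "subring R" "noetherian R R" and "finite I"
    and X: "\<And>e i. i < k ^ e \<Longrightarrow> X e i \<in> vectors R I"
    and g: "\<And>e i n. i < k ^ e \<Longrightarrow> g (k ^ e * n + i) = (\<Sum>j\<in>I. X e i j * \<phi> j n)"
  shows "k_regular k g"
proof -
  define \<Phi> where "\<Phi> x = (\<lambda>n. \<Sum>j\<in>I. x j * \<phi> j n)" for x :: "'i \<Rightarrow> 'a"
  define Xs where "Xs = {X e i | e i. i < k ^ e}"
  have kernel: "k_kernel k g = \<Phi> ` Xs"
  proof (intro equalityI subsetI)
    fix h assume "h \<in> k_kernel k g"
    then obtain e i where "h = (\<lambda>n. g (k ^ e * n + i))" "i < k ^ e" unfolding k_kernel_def by blast
    then have "h = \<Phi> (X e i)" using g by (simp add: \<Phi>_def)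
    then show "h \<in> \<Phi> ` Xs" using \<open>i < k ^ e\<close> by (auto simp: Xs_def)
  next
    fix h assume "h \<in> \<Phi> ` Xs"
    then obtain e i where "h = \<Phi> (X e i)" "i < k ^ e" by (auto simp: Xs_def)
    then show "h \<in> k_kernel k g"
      unfolding k_kernel_def using g by (intro CollectI exI[of _ e] exI[of _ i]) (simp add: \<Phi>_def)
  qed
  have "Xs \<subseteq> vectors R I" using X by (auto simp: Xs_def)
  then obtain X0 where X0: "finite X0" "X0 \<subseteq> Xs" "Xs \<subseteq> span_over (const_funs R) X0"
    using noetherian_finite_spanning_subset[OF subring_const_funs[OF R(1)]
        noetherian_vectors[OF R \<open>finite I\<close>] submodule_vectors[OF R(1)]] by blast
  have "\<Phi> ` span_over (const_funs R) X0 \<subseteq> span_over (const_funs R) (\<Phi> ` X0)"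
    by (rule span_over_map) (simp_all add: \<Phi>_def fun_eq_iff sum.distrib distrib_right sum_distrib_left mult.assoc)
  also have "\<dots> \<subseteq> span_over (const_funs UNIV) (\<Phi> ` X0)" by (rule span_over_mono) auto
  finally have "k_kernel k g \<subseteq> span_over (const_funs UNIV) (\<Phi> ` X0)"
    using kernel X0(3) by blast
  then show ?thesis
    unfolding k_regular_def using kernel X0(1,2) span_over_const_funs_combination[of "\<Phi> ` X0"]
    by (intro exI[of _ "\<Phi> ` X0"]) blast
qed

lemma sum_select_row:
  fixes x :: "'a \<Rightarrow> 'b \<Rightarrow> 'c::comm_semiring_0"
  assumes "finite A" "h \<in> A"
  shows "(\<Sum>(a, t)\<in>A \<times> S. x a t * (if a = h then y t else 0)) = (\<Sum>t\<in>S. x h t * y t)"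
proof -
  have "(\<Sum>(a, t)\<in>A \<times> S. x a t * (if a = h then y t else 0))
      = (\<Sum>a\<in>A. \<Sum>t\<in>S. x a t * (if a = h then y t else 0))"
    by (rule sum.cartesian_product[symmetric])
  also have "\<dots> = (\<Sum>a\<in>A. if a = h then \<Sum>t\<in>S. x h t * y t else 0)"
    by (rule sum.cong) simp_all
  finally show ?thesis using assms by simp
qed

lemma k_regularI_selected_coordinates:
  fixes g :: "nat \<Rightarrow> 'a::comm_ring_1" and X :: "nat \<Rightarrow> nat \<Rightarrow> 'q::finite \<Rightarrow> 'b \<Rightarrow> 'a"
  assumes R: "subring R" "noetherian R R" and "finite S"
    and X: "\<And>e i q. i < k ^ e \<Longrightarrow> X e i q \<in> vectors R S"
    and g: "\<And>e i n. i < k ^ e \<Longrightarrow> g (k ^ e * n + i) = (\<Sum>t\<in>S. X e i (\<sigma> n) t * \<phi> t n)"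
  shows "k_regular k g"
proof (rule k_regularI_coordinates[OF R, where I = "UNIV \<times> S"
      and X = "\<lambda>e i (q, t). X e i q t" and \<phi> = "\<lambda>(q, t) n. if q = \<sigma> n then \<phi> t n else 0"])
  show "finite (UNIV \<times> S :: ('q \<times> 'b) set)" using \<open>finite S\<close> by simp
  show "(\<lambda>(q, t). X e i q t) \<in> vectors R (UNIV \<times> S)" if "i < k ^ e" for e i
    using X[OF that] by (auto simp: vectors_def)
  show "g (k ^ e * n + i) = (\<Sum>j\<in>UNIV \<times> S. (case j of (q, t) \<Rightarrow> X e i q t) *
      (case j of (q, t) \<Rightarrow> \<lambda>n. if q = \<sigma> n then \<phi> t n else 0) n)" if "i < k ^ e" for e i n
    using g[OF that] sum_select_row[where A = UNIV and h = "\<sigma> n" and x = "X e i" and y = "\<lambda>t. \<phi> t n"] by (simp add: case_prod_beta)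
qed

lemma k_kernel_self: "f \<in> k_kernel k f"
  unfolding k_kernel_def by (intro CollectI exI[of _ 0]) simp

lemma k_kernel_step:
  assumes "s \<in> k_kernel k f" "d < k"
  shows "(\<lambda>n. s (k * n + d)) \<in> k_kernel k f"
proof -
  obtain e i where s: "s = (\<lambda>n. f (k ^ e * n + i))" "i < k ^ e"
    using assms(1) unfolding k_kernel_def by blast
  have "k ^ e * d + i < k ^ e * (d + 1)" using s(2) by simp
  also have "\<dots> \<le> k ^ e * k" using assms(2) by (intro mult_le_mono2) simp
  also have "\<dots> = k ^ Suc e" by (simp add: mult.commute)
  finally have "k ^ e * d + i < k ^ Suc e" .
  moreover have "(\<lambda>n. s (k * n + d)) = (\<lambda>n. f (k ^ Suc e * n + (k ^ e * d + i)))"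
    using s(1) by (simp add: algebra_simps)
  ultimately show ?thesis unfolding k_kernel_def by blast
qed

lemma word_kernel_coordinates:
  fixes f :: "nat \<Rightarrow> 'a::comm_ring_1"
  assumes R: "subring R"
    and b: "\<And>n. f n = (\<Sum>t\<in>S. b t * t n)" "\<And>t. t \<in> S \<Longrightarrow> b t \<in> R"
    and A: "\<And>d s n. d < k \<Longrightarrow> s \<in> S \<Longrightarrow> s (k * n + d) = (\<Sum>t\<in>S. A d s t * t n)"
      "\<And>d s t. d < k \<Longrightarrow> s \<in> S \<Longrightarrow> t \<in> S \<Longrightarrow> A d s t \<in> R"
  shows "set v \<subseteq> {..<k} \<Longrightarrow>
    \<exists>c \<in> vectors R S. \<forall>n. f (k ^ length v * n + word_val k v) = (\<Sum>t\<in>S. c t * t n)"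
proof (induction v)
  case Nil
  have "(\<lambda>t. if t \<in> S then b t else 0) \<in> vectors R S" using b(2) by (auto simp: vectors_def)
  then show ?case using b(1) by (intro bexI[of _ "\<lambda>t. if t \<in> S then b t else 0"]) simp_all
next
  case (Cons d v)
  then obtain c where c: "c \<in> vectors R S" "\<And>n. f (k ^ length v * n + word_val k v) = (\<Sum>t\<in>S. c t * t n)"
    by auto
  define c' where "c' u = (if u \<in> S then \<Sum>t\<in>S. c t * A d t u else 0)" for u
  have "c' \<in> vectors R S"
    using c(1) A(2) Cons.prems unfolding vectors_def c'_def
    by (auto intro!: subring_sum[OF R] subring_mult[OF R])
  moreover have "f (k ^ length (d # v) * n + word_val k (d # v)) = (\<Sum>u\<in>S. c' u * u n)" for n
  proof -
    have "f (k ^ length (d # v) * n + word_val k (d # v)) = f (k ^ length v * (k * n + d) + word_val k v)"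
      by (simp add: word_val_Cons algebra_simps)
    also have "\<dots> = (\<Sum>t\<in>S. c t * (\<Sum>u\<in>S. A d t u * u n))"
      using c(2) A(1) Cons.prems by simp
    also have "\<dots> = (\<Sum>t\<in>S. \<Sum>u\<in>S. c t * A d t u * u n)"
      by (simp add: sum_distrib_left mult.assoc)
    also have "\<dots> = (\<Sum>u\<in>S. \<Sum>t\<in>S. c t * A d t u * u n)"
      by (rule sum.swap)
    also have "\<dots> = (\<Sum>u\<in>S. (\<Sum>t\<in>S. c t * A d t u) * u n)"
      by (simp add: sum_distrib_right)
    also have "\<dots> = (\<Sum>u\<in>S. c' u * u n)" by (simp add: c'_def)
    finally show ?thesis .
  qed
  ultimately show ?case by blast
qed

lemma k_regular_kernel_coordinates:
  fixes f :: "nat \<Rightarrow> 'a::comm_ring_1"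
  assumes "k_regular k f"
  obtains S R C where "finite S" "subring R" "noetherian R R"
    "\<And>v. set v \<subseteq> {..<k} \<Longrightarrow> C v \<in> vectors R S"
    "\<And>v n. set v \<subseteq> {..<k} \<Longrightarrow> f (k ^ length v * n + word_val k v) = (\<Sum>t\<in>S. C v t * t n)"
proof -
  obtain S where S: "finite S" "S \<subseteq> k_kernel k f"
    and span: "\<And>h. h \<in> k_kernel k f \<Longrightarrow> \<exists>c. h = (\<lambda>n. \<Sum>s\<in>S. c s * s n)"
    using assms unfolding k_regular_def by blast
  have "\<exists>c. \<forall>n. s (k * n + d) = (\<Sum>t\<in>S. c t * t n)" if d: "d < k" and s: "s \<in> S" for d s
  proof -
    obtain c where "(\<lambda>n. s (k * n + d)) = (\<lambda>n. \<Sum>t\<in>S. c t * t n)"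
      using span[OF k_kernel_step[OF subsetD[OF S(2) s] d]] by blast
    then show ?thesis by (intro exI[of _ c]) (simp add: fun_eq_iff)
  qed
  then obtain A where A: "\<And>d s n. d < k \<Longrightarrow> s \<in> S \<Longrightarrow> s (k * n + d) = (\<Sum>t\<in>S. A d s t * t n)"
    by (metis (no_types))
  obtain b where "f = (\<lambda>n. \<Sum>t\<in>S. b t * t n)" using span[OF k_kernel_self] by blast
  then have b: "f n = (\<Sum>t\<in>S. b t * t n)" for n by simp
  obtain R where R: "subring R" "noetherian R R"
    and coeffs: "(\<lambda>(d, s, t). A d s t) ` ({..<k} \<times> S \<times> S) \<union> b ` S \<subseteq> R"
    using noetherian_subring_containing[of "(\<lambda>(d, s, t). A d s t) ` ({..<k} \<times> S \<times> S) \<union> b ` S"] S(1)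
    by auto
  have A_R: "A d s t \<in> R" if "d < k" "s \<in> S" "t \<in> S" for d s t
  proof -
    have "A d s t \<in> (\<lambda>(d, s, t). A d s t) ` ({..<k} \<times> S \<times> S)"
      using that by (intro image_eqI[where x = "(d, s, t)"]) auto
    then show ?thesis using coeffs by blast
  qed
  have "b t \<in> R" if "t \<in> S" for t using coeffs that by blast
  then have "\<forall>v. \<exists>c. set v \<subseteq> {..<k} \<longrightarrow>
      c \<in> vectors R S \<and> (\<forall>n. f (k ^ length v * n + word_val k v) = (\<Sum>t\<in>S. c t * t n))"
    using word_kernel_coordinates[OF R(1) b _ A A_R] by blast
  then have "\<exists>C. \<forall>v. set v \<subseteq> {..<k} \<longrightarrow>
      C v \<in> vectors R S \<and> (\<forall>n. f (k ^ length v * n + word_val k v) = (\<Sum>t\<in>S. C v t * t n))"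
    by (rule choice)
  then show ?thesis using that S(1) R by blast
qed

lemma rho_star_append:
  "rho_star \<delta> \<rho> q (u @ v) = rho_star \<delta> \<rho> q u @ rho_star \<delta> \<rho> (delta_star \<delta> q u) v"
  by (induction u arbitrary: q) simp_all

lemma rho_star_digits:
  "(\<And>q a. a < k \<Longrightarrow> set (\<rho> q a) \<subseteq> {..<k}) \<Longrightarrow> set w \<subseteq> {..<k} \<Longrightarrow> set (rho_star \<delta> \<rho> q w) \<subseteq> {..<k}"
  by (induction w arbitrary: q) auto

lemma rho_star_base_rep_split:
  assumes "k \<ge> 2" "i < k ^ e"
  shows "rho_star \<delta> \<rho> q (base_rep k (k ^ e * n + i)) = rho_star \<delta> \<rho> q (base_rep k n) @
    (if n = 0 then rho_star \<delta> \<rho> q (base_rep k i)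
     else rho_star \<delta> \<rho> (delta_star \<delta> q (base_rep k n)) (low_digits k e i))"
proof (cases "n = 0")
  case False
  then show ?thesis using base_rep_append_low_digits[OF assms(1) _ assms(2)] by (simp add: rho_star_append)
qed simp

theorem lemma1:
  fixes k :: nat
    and f :: "nat \<Rightarrow> 'a::comm_ring_1"
    and \<delta> :: "'q::finite \<Rightarrow> nat \<Rightarrow> 'q"
    and \<rho> :: "'q \<Rightarrow> nat \<Rightarrow> nat list"
    and q0 :: 'q
    and F :: "'q set"
  assumes "k \<ge> 2"
    and "k_regular k f"
    and "\<And>q a. a < k \<Longrightarrow> set (\<rho> q a) \<subseteq> {..<k}"
    and "\<And>n. delta_star \<delta> q0 (base_rep k n) \<in> F"
  shows "k_regular k (\<lambda>n. f (word_val k (rho_star \<delta> \<rho> q0 (base_rep k n))))"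
proof -
  \<comment> \<open>The last hypothesis only says that the output is always defined; \<open>rho_star\<close> is total.\<close>
  obtain S R C where S: "finite S" and R: "subring R" "noetherian R R"
    and C: "\<And>v. set v \<subseteq> {..<k} \<Longrightarrow> C v \<in> vectors R S"
    and f_C: "\<And>v n. set v \<subseteq> {..<k} \<Longrightarrow> f (k ^ length v * n + word_val k v) = (\<Sum>t\<in>S. C v t * t n)"
    using k_regular_kernel_coordinates[OF assms(2)] by blast
  \<comment> \<open>\<open>None\<close> is the empty prefix \<open>n = 0\<close>; then the whole output is read off the digits of \<open>i\<close>.\<close>
  define state where "state n = (if n = 0 then None else Some (delta_star \<delta> q0 (base_rep k n)))" for n
  define suffix where "suffix e i q = (case q of None \<Rightarrow> rho_star \<delta> \<rho> q0 (base_rep k i)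
    | Some p \<Rightarrow> rho_star \<delta> \<rho> p (low_digits k e i))" for e i q
  define val where "val n = word_val k (rho_star \<delta> \<rho> q0 (base_rep k n))" for n
  have suffix_digits: "set (suffix e i q) \<subseteq> {..<k}" for e i q
    using assms(1) by (simp add: suffix_def rho_star_digits[OF assms(3)] base_rep_digits low_digits_digits
        split: option.split)
  show ?thesis
  proof (rule k_regularI_selected_coordinates[OF R S, where X = "\<lambda>e i q. C (suffix e i q)"])
    show "C (suffix e i q) \<in> vectors R S" for e i q using C[OF suffix_digits] .
    fix e i n assume "i < k ^ e"
    then have "rho_star \<delta> \<rho> q0 (base_rep k (k ^ e * n + i)) = rho_star \<delta> \<rho> q0 (base_rep k n) @ suffix e i (state n)"
      using rho_star_base_rep_split[OF assms(1), of i e \<delta> \<rho> q0 n]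
      by (cases "n = 0") (simp_all add: suffix_def state_def)
    then have "word_val k (rho_star \<delta> \<rho> q0 (base_rep k (k ^ e * n + i)))
        = k ^ length (suffix e i (state n)) * val n + word_val k (suffix e i (state n))"
      by (simp add: word_val_append val_def mult.commute)
    then show "f (word_val k (rho_star \<delta> \<rho> q0 (base_rep k (k ^ e * n + i))))
        = (\<Sum>t\<in>S. C (suffix e i (state n)) t * t (val n))"
      using f_C[OF suffix_digits] by simp
  qed
qed

end
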